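(* Let $n\ge2$, $C>0$, let $x\in\mathcal{K}_{S+}$ with $x_1\le\dots\le x_n$, and let $\tilde{x}=x+\eta$ with $\eta\sim\mathcal{N}(0,\sigma^2I_n)$, $\sigma>0$. Set $a=\frac{1}{\sigma}\sqrt{\frac{n}{n-1}}$. Then $$\mathcal{B}((\pi_S)_+)_1-\mathcal{B}((\pi_S)_+)_n=\int_{-x_n}^{-x_1}\Phi(at)\,dt\ \in\ \big[\Phi(-ax_n)(x_n-x_1),\ \Phi(-ax_1)(x_n-x_1)\big],$$ where $\Phi$ is the standard Gaussian cumulative distribution function.
   Context: $\mathcal{K}_S=\{v\in\mathbb{R}^n:\sum_i v_i=C\}$, $\mathcal{K}_{S+}=\{v\in\mathcal{K}_S:v\ge0\}$, $\pi_S$ is the Euclidean projection onto $\mathcal{K}_S$ (so $\pi_S(\tilde{x})_i=\tilde{x}_i+(C-\sum_j\tilde{x}_j)/n$). $(y)_+=\max\{y,0\}$ componentwise, and $\mathcal{B}((\pi_S)_+)=\mathbb{E}_{\tilde{x}}[(\pi_S(\tilde{x}))_+]-x$. *)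

theory Defs
  imports "HOL-Probability.Probability"
begin

text \<open>Vectors in R^n are functions nat => real, only indices 0..n-1 matter
  (paper index i corresponds to i-1 here).\<close>

definition proj_S :: "real \<Rightarrow> nat \<Rightarrow> (nat \<Rightarrow> real) \<Rightarrow> (nat \<Rightarrow> real)" where
  "proj_S C n v = (\<lambda>i. v i + (C - (\<Sum>j<n. v j)) / real n)"

definition gauss_noise :: "nat \<Rightarrow> real \<Rightarrow> (nat \<Rightarrow> real) measure" where
  "gauss_noise n \<sigma> = PiM {..<n} (\<lambda>i. density lborel (normal_density 0 \<sigma>))"

definition bias_proj_pos :: "real \<Rightarrow> nat \<Rightarrow> real \<Rightarrow> (nat \<Rightarrow> real) \<Rightarrow> nat \<Rightarrow> real" where
  "bias_proj_pos C n \<sigma> x i =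
     (\<integral>\<eta>. max 0 (proj_S C n (\<lambda>j. x j + \<eta> j) i) \<partial>gauss_noise n \<sigma>) - x i"

definition Phi :: "real \<Rightarrow> real" where
  "Phi t = measure (density lborel std_normal_density) {..t}"

end

theory Submission
  imports Defs
begin

text \<open>Put \<open>\<xi>\<^sub>i = \<eta>\<^sub>i - (\<Sum>\<^sub>j \<eta>\<^sub>j) / n\<close>. Since \<open>\<Sum>\<^sub>j x\<^sub>j = C\<close>, the \<open>i\<close>-th coordinate of
  \<open>\<pi>\<^sub>S(x + \<eta>)\<close> is \<open>x\<^sub>i + \<xi>\<^sub>i\<close>, and every \<open>\<xi>\<^sub>i\<close> is centred normal with standard
  deviation \<open>s = \<sigma> sqrt ((n - 1) / n) = 1 / a\<close>. So the bias at \<open>i\<close> is \<open>f (x\<^sub>i)\<close> with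
  \<open>f c = E (c + \<xi>)\<^sub>+ - c\<close>. For \<open>u \<le> v\<close>, \<open>((u + y)\<^sub>+ - u) - ((v + y)\<^sub>+ - v)\<close> is the length of
  \<open>[-v, -u] \<inter> [y, \<infinity>)\<close>; integrating in \<open>y\<close> and swapping the integrals (Tonelli) turns
  \<open>f u - f v\<close> into the integral of \<open>P(\<xi> \<le> t) = \<Phi>(a t)\<close> over \<open>[-v, -u]\<close>. This integrand is
  increasing, which gives the two bounds.\<close>

lemma mono_set_integrable_Icc:
  fixes f :: "real \<Rightarrow> real"
  assumes "mono f" and "a \<le> b"
  shows "set_integrable lborel {a..b} f"
proof -
  have [measurable]: "f \<in> borel_measurable borel"
    using assms(1) by (rule borel_measurable_mono)
  have "f a \<le> f t" "f t \<le> f b" if "t \<in> {a..b}" for t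
    using that assms(1) by (auto intro: monoD)
  then show ?thesis
    unfolding set_integrable_def
    by (intro integrableI_bounded_set_indicator[where B="\<bar>f a\<bar> + \<bar>f b\<bar>"])
       (use assms(2) in \<open>fastforce intro!: AE_I2 simp: abs_le_iff\<close>)+
qed

lemma mono_interval_integral_bounds:
  fixes f :: "real \<Rightarrow> real"
  assumes "mono f" and "a \<le> b"
  shows "f a * (b - a) \<le> (LBINT t=a..b. f t)" and "(LBINT t=a..b. f t) \<le> f b * (b - a)"
proof -
  have between: "f a \<le> f t" "f t \<le> f b" if "t \<in> {a..b}" for t
    using that assms(1) by (auto intro: monoD)
  have "set_integrable lborel {a..b} f"
    using assms by (rule mono_set_integrable_Icc)
  moreover have "set_integrable lborel {a..b} (\<lambda>_. c)" for c :: real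
    using assms(2) by (simp add: set_integrable_def integrable_real_indicator)
  ultimately have "(LBINT t:{a..b}. f a) \<le> (LBINT t:{a..b}. f t)" "(LBINT t:{a..b}. f t) \<le> (LBINT t:{a..b}. f b)"
    using between by (auto intro!: set_integral_mono)
  moreover have "(LBINT t:{a..b}. c) = c * (b - a)" for c
    using interval_integral_const(2)[of c a b] interval_integral_Icc[OF assms(2), of "\<lambda>_. c"] by simp
  ultimately show "f a * (b - a) \<le> (LBINT t=a..b. f t)" "(LBINT t=a..b. f t) \<le> f b * (b - a)"
    by (simp_all add: interval_integral_Icc[OF assms(2)])
qed

lemma Phi_eq_cdf: "Phi = cdf std_normal_distribution"
  by (simp add: fun_eq_iff Phi_def cdf_def)

lemma mono_Phi: "mono Phi"
proof -
  interpret real_distribution std_normal_distribution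
    by (rule real_dist_normal_dist)
  show ?thesis
    unfolding Phi_eq_cdf by (intro monoI cdf_nondecreasing)
qed

lemma mono_Phi_scaled:
  assumes "a \<ge> 0"
  shows "mono (\<lambda>t. Phi (a * t))"
  using assms by (intro monoI monoD[OF mono_Phi] mult_left_mono)

lemma cdf_normal_density:
  assumes "s > 0"
  shows "cdf (density lborel (normal_density 0 s)) t = Phi (t / s)"
proof -
  interpret std: prob_space std_normal_distribution
    by (rule prob_space_normal_density) simp
  have "distributed std_normal_distribution lborel (\<lambda>z. z) std_normal_density"
    by (simp add: distributed_def distr_id2)
  from std.normal_density_affine[OF this, of s 0] assms
  have "distr std_normal_distribution lborel (\<lambda>z. s * z) = density lborel (normal_density 0 s)"
    by (auto dest: distributed_distr_eq_density)
  then have "cdf (density lborel (normal_density 0 s)) t = measure (distr std_normal_distribution lborel (\<lambda>z. s * z)) {..t}"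
    by (simp add: cdf_def)
  also have "\<dots> = measure std_normal_distribution {z. s * z \<le> t}"
    by (subst measure_distr) (auto simp: vimage_def)
  also have "{z. s * z \<le> t} = {..t / s}"
    using assms by (auto simp: field_simps)
  finally show ?thesis by (simp add: Phi_eq_cdf cdf_def)
qed

lemma pos_part_shift_diff_eq_length:
  fixes u v y :: real
  assumes "u \<le> v"
  shows "ennreal ((max 0 (u + y) - u) - (max 0 (v + y) - v))
           = (\<integral>\<^sup>+t. indicator {-v..-u} t * indicator {..t} y \<partial>lborel)"
proof -
  have "(\<integral>\<^sup>+t. indicator {-v..-u} t * indicator {..t} y \<partial>lborel)
      = (\<integral>\<^sup>+t. indicator ({-v..-u} \<inter> {y..}) t \<partial>lborel)"
    by (intro nn_integral_cong) (auto split: split_indicator)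
  also have "\<dots> = emeasure lborel ({-v..-u} \<inter> {y..})"
    by simp
  also have "\<dots> = ennreal ((max 0 (u + y) - u) - (max 0 (v + y) - v))"
  proof (cases "y \<le> -u")
    case True
    then have "{-v..-u} \<inter> {y..} = {max (-v) y .. -u}" by auto
    with True assms show ?thesis by (simp add: max_def)
  next
    case False
    then have "{-v..-u} \<inter> {y..} = {}" by auto
    with False assms show ?thesis by (simp add: max_def)
  qed
  finally show ?thesis ..
qed

lemma (in real_distribution) integral_pos_part_shift_diff_eq_integral_cdf:
  fixes u v :: real
  assumes "integrable M (\<lambda>y. y)" and "u \<le> v"
  shows "((\<integral>y. max 0 (u + y) \<partial>M) - u) - ((\<integral>y. max 0 (v + y) \<partial>M) - v) = (LBINT t=-v..-u. cdf M t)"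
proof -
  interpret pair_sigma_finite M lborel
    by (intro pair_sigma_finite.intro sigma_finite_measure_axioms lborel.sigma_finite_measure_axioms)
  define h where "h y = (max 0 (u + y) - u) - (max 0 (v + y) - v)" for y
  have pos_part_integrable: "integrable M (\<lambda>y. max 0 (c + y))" for c
  proof (rule Bochner_Integration.integrable_bound)
    show "integrable M (\<lambda>y. \<bar>c\<bar> + \<bar>y\<bar>)"
      using assms(1) by simp
    show "AE y in M. norm (max 0 (c + y)) \<le> norm (\<bar>c\<bar> + \<bar>y\<bar>)"
      by (intro AE_I2) auto
  qed simp
  have h_integral: "((\<integral>y. max 0 (u + y) \<partial>M) - u) - ((\<integral>y. max 0 (v + y) \<partial>M) - v) = (\<integral>y. h y \<partial>M)"
    unfolding h_def using pos_part_integrable prob_space by simp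
  have h_nonneg: "0 \<le> h y" for y
    using assms(2) by (auto simp: h_def max_def)
  have cdf_integrable: "set_integrable lborel {-v..-u} (cdf M)"
    using assms(2) by (intro mono_set_integrable_Icc) (auto intro: monoI cdf_nondecreasing)
  have "ennreal (\<integral>y. h y \<partial>M) = (\<integral>\<^sup>+y. h y \<partial>M)"
    using h_nonneg pos_part_integrable by (intro nn_integral_eq_integral[symmetric]) (auto simp: h_def)
  also have "\<dots> = (\<integral>\<^sup>+y. (\<integral>\<^sup>+t. indicator {-v..-u} t * indicator {..t} y \<partial>lborel) \<partial>M)"
    by (simp add: h_def pos_part_shift_diff_eq_length assms(2))
  also have "\<dots> = (\<integral>\<^sup>+t. (\<integral>\<^sup>+y. indicator {-v..-u} t * indicator {..t} y \<partial>M) \<partial>lborel)"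
  proof (rule Fubini'[THEN sym])
    have "(\<lambda>(y, t). indicator {-v..-u} t * indicator {..t} y :: ennreal)
        = (\<lambda>p. indicator {-v..-u} (snd p) * (if fst p \<le> snd p then 1 else 0))"
      by (auto simp: fun_eq_iff split: split_indicator)
    also have "\<dots> \<in> borel_measurable (M \<Otimes>\<^sub>M lborel)"
      by measurable
    finally show "(\<lambda>(y, t). indicator {-v..-u} t * indicator {..t} y :: ennreal) \<in> borel_measurable (M \<Otimes>\<^sub>M lborel)" .
  qed
  also have "\<dots> = (\<integral>\<^sup>+t. ennreal (indicator {-v..-u} t * cdf M t) \<partial>lborel)"
    by (intro nn_integral_cong) (simp add: nn_integral_cmult emeasure_eq_measure cdf_def split: split_indicator)
  also have "\<dots> = ennreal (LBINT t:{-v..-u}. cdf M t)"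
    using cdf_integrable unfolding set_integrable_def set_lebesgue_integral_def real_scaleR_def
    by (intro nn_integral_eq_integral) (auto simp: cdf_nonneg)
  finally have "ennreal (\<integral>y. h y \<partial>M) = ennreal (LBINT t:{-v..-u}. cdf M t)" .
  moreover have "0 \<le> (LBINT t:{-v..-u}. cdf M t)"
    unfolding set_lebesgue_integral_def by (simp add: cdf_nonneg)
  ultimately show ?thesis
    using h_integral h_nonneg assms(2) by (simp add: interval_integral_Icc)
qed

lemma (in product_prob_space) indep_vars_PiM_components:
  "prob_space.indep_vars (\<Pi>\<^sub>M i\<in>I. M i) M (\<lambda>i \<omega>. \<omega> i) I"
proof (cases "I = {}")
  case True
  then show ?thesis
    unfolding P.indep_vars_def P.indep_sets_def by simp
next
  case False
  have "distr (\<Pi>\<^sub>M i\<in>I. M i) (\<Pi>\<^sub>M i\<in>I. M i) (\<lambda>\<omega>. \<lambda>i\<in>I. \<omega> i) = (\<Pi>\<^sub>M i\<in>I. M i)"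
    by (subst distr_cong[where g="\<lambda>\<omega>. \<omega>"]) (auto simp: space_PiM)
  also have "\<dots> = (\<Pi>\<^sub>M i\<in>I. distr (\<Pi>\<^sub>M i\<in>I. M i) (M i) (\<lambda>\<omega>. \<omega> i))"
    by (intro PiM_cong) (simp_all add: PiM_component)
  finally show ?thesis
    using False by (subst P.indep_vars_iff_distr_eq_PiM') auto
qed

lemma (in prob_space) deviation_from_mean_normal_distributed:
  fixes X :: "'i \<Rightarrow> 'a \<Rightarrow> real"
  assumes "finite I" and "i \<in> I" and "card I \<ge> 2" and "\<sigma> > 0"
    and indep: "indep_vars (\<lambda>_. borel) X I"
    and normal: "\<And>j. j \<in> I \<Longrightarrow> distributed M lborel (X j) (normal_density 0 \<sigma>)"
  shows "distributed M lborel (\<lambda>\<omega>. X i \<omega> - (\<Sum>j\<in>I. X j \<omega>) / card I)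
           (normal_density 0 (\<sigma> * sqrt ((real (card I) - 1) / card I)))"
proof -
  define m where "m = real (card I)"
  define c where "c j = (if j = i then 1 else 0) - 1 / m" for j
  have m: "m \<ge> 2"
    using assms(3) by (simp add: m_def)
  have c_nonzero: "c j \<noteq> 0" for j
    using m by (auto simp: c_def field_simps)
  have "distributed M lborel (\<lambda>\<omega>. \<Sum>j\<in>I. c j * X j \<omega>)
          (normal_density (\<Sum>j\<in>I. c j * 0) (sqrt (\<Sum>j\<in>I. (\<bar>c j\<bar> * \<sigma>)\<^sup>2)))"
  proof (rule sum_indep_normal)
    show "indep_vars (\<lambda>_. borel) (\<lambda>j \<omega>. c j * X j \<omega>) I"
      by (rule indep_vars_compose2[OF indep]) auto
    show "distributed M lborel (\<lambda>\<omega>. c j * X j \<omega>) (normal_density (c j * 0) (\<bar>c j\<bar> * \<sigma>))" if "j \<in> I" for j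
      using normal_density_affine[OF normal[OF that] \<open>\<sigma> > 0\<close> c_nonzero, of 0] by simp
  qed (use assms c_nonzero in auto)
  moreover have "(\<lambda>\<omega>. \<Sum>j\<in>I. c j * X j \<omega>) = (\<lambda>\<omega>. X i \<omega> - (\<Sum>j\<in>I. X j \<omega>) / card I)"
  proof
    fix \<omega>
    have "(\<Sum>j\<in>I. c j * X j \<omega>) = (\<Sum>j\<in>I. if j = i then X j \<omega> else 0) - (\<Sum>j\<in>I. X j \<omega> / m)"
      unfolding sum_subtractf[symmetric] by (rule sum.cong) (auto simp: c_def algebra_simps)
    then show "(\<Sum>j\<in>I. c j * X j \<omega>) = X i \<omega> - (\<Sum>j\<in>I. X j \<omega>) / card I"
      using assms(1,2) by (simp add: m_def sum_divide_distrib)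
  qed
  moreover have "sqrt (\<Sum>j\<in>I. (\<bar>c j\<bar> * \<sigma>)\<^sup>2) = \<sigma> * sqrt ((m - 1) / m)"
  proof -
    have "(\<Sum>j\<in>I. (c j)\<^sup>2) = (c i)\<^sup>2 + (\<Sum>j\<in>I - {i}. (1 / m)\<^sup>2)"
      using assms(1,2) by (simp add: sum.remove c_def)
    also have "(\<Sum>j\<in>I - {i}. (1 / m)\<^sup>2) = (m - 1) * (1 / m)\<^sup>2"
      using assms(1,2) m by (simp add: m_def of_nat_diff)
    also have "(c i)\<^sup>2 + (m - 1) * (1 / m)\<^sup>2 = (m - 1) / m"
      using m by (simp add: c_def field_simps power2_eq_square)
    finally have "(\<Sum>j\<in>I. (\<bar>c j\<bar> * \<sigma>)\<^sup>2) = \<sigma>\<^sup>2 * ((m - 1) / m)"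
      by (simp add: power_mult_distrib sum_distrib_left[symmetric] mult.commute)
    then show ?thesis
      using \<open>\<sigma> > 0\<close> by (simp only: real_sqrt_mult real_sqrt_abs abs_of_pos)
  qed
  ultimately show ?thesis
    by (simp add: m_def)
qed

lemma bias_proj_pos_eq_normal_expectation:
  assumes "n \<ge> 2" and "\<sigma> > 0" and "i < n" and "(\<Sum>j<n. x j) = C"
  shows "bias_proj_pos C n \<sigma> x i =
    (\<integral>y. max 0 (x i + y) \<partial>density lborel (normal_density 0 (\<sigma> * sqrt ((real n - 1) / n)))) - x i"
proof -
  let ?N = "density lborel (normal_density 0 \<sigma>)"
  interpret product_prob_space "\<lambda>_. ?N" "{..<n}"
    using assms(2) by (intro product_prob_spaceI prob_space_normal_density)
  have indep: "P.indep_vars (\<lambda>_. borel) (\<lambda>j \<eta>. \<eta> j) {..<n}"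
    by (rule P.indep_vars_compose2[OF indep_vars_PiM_components, where Y="\<lambda>_ y. y"]) simp
  have normal: "distributed (gauss_noise n \<sigma>) lborel (\<lambda>\<eta>. \<eta> j) (normal_density 0 \<sigma>)" if "j < n" for j
  proof -
    have "distr (gauss_noise n \<sigma>) lborel (\<lambda>\<eta>. \<eta> j) = distr (gauss_noise n \<sigma>) ?N (\<lambda>\<eta>. \<eta> j)"
      by (rule distr_cong) auto
    also have "\<dots> = ?N"
      unfolding gauss_noise_def using that by (intro PiM_component) simp
    finally show ?thesis
      using that by (simp add: distributed_def gauss_noise_def)
  qed
  define \<xi> where "\<xi> = (\<lambda>\<eta> :: nat \<Rightarrow> real. \<eta> i - (\<Sum>j<n. \<eta> j) / n)"
  have \<xi>_normal: "distributed (gauss_noise n \<sigma>) lborel \<xi> (normal_density 0 (\<sigma> * sqrt ((real n - 1) / n)))"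
    using P.deviation_from_mean_normal_distributed[OF _ _ _ assms(2) indep, of i] normal assms(1,3)
    by (simp add: \<xi>_def gauss_noise_def)
  have "proj_S C n (\<lambda>j. x j + \<eta> j) i = x i + \<xi> \<eta>" for \<eta>
    using assms(4) by (simp add: proj_S_def \<xi>_def sum.distrib diff_divide_distrib)
  then have "(\<integral>\<eta>. max 0 (proj_S C n (\<lambda>j. x j + \<eta> j) i) \<partial>gauss_noise n \<sigma>)
      = (\<integral>y. max 0 (x i + y) \<partial>distr (gauss_noise n \<sigma>) lborel \<xi>)"
    using distributed_measurable[OF \<xi>_normal] by (simp add: integral_distr)
  then show ?thesis
    unfolding bias_proj_pos_def distributed_distr_eq_density[OF \<xi>_normal] by simp
qed

theorem proposition2:
  fixes n :: nat and C \<sigma> :: real and x :: "nat \<Rightarrow> real"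
  assumes "n \<ge> 2" and "C > 0" and "\<sigma> > 0"
    and "(\<Sum>i<n. x i) = C" and "\<forall>i<n. x i \<ge> 0"
    and "\<forall>i j. i \<le> j \<longrightarrow> j < n \<longrightarrow> x i \<le> x j"
  defines "a \<equiv> (1 / \<sigma>) * sqrt (real n / (real n - 1))"
  shows "bias_proj_pos C n \<sigma> x 0 - bias_proj_pos C n \<sigma> x (n - 1)
           = (LBINT t=-x (n - 1)..-x 0. Phi (a * t))
       \<and> (LBINT t=-x (n - 1)..-x 0. Phi (a * t))
           \<in> {Phi (- a * x (n - 1)) * (x (n - 1) - x 0) .. Phi (- a * x 0) * (x (n - 1) - x 0)}"
proof -
  define s where "s = \<sigma> * sqrt ((real n - 1) / n)"
  have "s > 0" and a_eq: "a = 1 / s"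
    using assms(1,3) by (auto simp: s_def a_def real_sqrt_divide field_simps)
  interpret N: real_distribution "density lborel (normal_density 0 s)"
    using \<open>s > 0\<close> by (simp add: real_distribution_def real_distribution_axioms_def prob_space_normal_density)
  have "integrable (density lborel (normal_density 0 s)) (\<lambda>y. y)"
    using integrable_normal_moment[OF \<open>s > 0\<close>, of 0 1] by (subst integrable_density) auto
  moreover have "x 0 \<le> x (n - 1)"
    using assms(1,6) by simp
  moreover have "cdf (density lborel (normal_density 0 s)) t = Phi (a * t)" for t
    using cdf_normal_density[OF \<open>s > 0\<close>] by (simp add: a_eq)
  moreover have "bias_proj_pos C n \<sigma> x i = (\<integral>y. max 0 (x i + y) \<partial>density lborel (normal_density 0 s)) - x i"
    if "i < n" for i
    unfolding s_def using assms(1,3) that assms(4) by (rule bias_proj_pos_eq_normal_expectation)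
  ultimately have "bias_proj_pos C n \<sigma> x 0 - bias_proj_pos C n \<sigma> x (n - 1)
      = (LBINT t=-x (n - 1)..-x 0. Phi (a * t))"
    using N.integral_pos_part_shift_diff_eq_integral_cdf assms(1) by simp
  moreover have "mono (\<lambda>t. Phi (a * t))"
    using \<open>s > 0\<close> by (intro mono_Phi_scaled) (simp add: a_eq)
  ultimately show ?thesis
    using mono_interval_integral_bounds[of "\<lambda>t. Phi (a * t)" "-x (n - 1)" "-x 0"] \<open>x 0 \<le> x (n - 1)\<close>
    by simp
qed

end
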